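(* Let $\mathsf{D}$ and $\mathsf{S}$ be optiongraphs, and suppose there are congruence relations $\theta$ on $\mathsf{D}$ and $\psi$ on $\mathsf{S}$ with $\mathsf{D}/\theta\cong\mathsf{S}/\psi$. Then the minimum quotients $\mathsf{D}/{\bowtie_\mathsf{D}}$ and $\mathsf{S}/{\bowtie_\mathsf{S}}$ are isomorphic.
   Context: An optiongraph is a nonempty set $\mathsf{D}$ of positions with an option function $\mathrm{Opt}_\mathsf{D}:\mathsf{D}\to 2^{\mathsf{D}}$. A map is option preserving if $\mathrm{Opt}_\mathsf{D}(f(p))=f(\mathrm{Opt}_\mathsf{C}(p))$; an isomorphism ($\cong$) is a bijective option-preserving map. For an equivalence relation $\theta$, $[p]_\theta$ is the class of $p$ and $[S]_\theta:=\{[s]_\theta\mid s\in S\}$; $\theta$ is a congruence relation if $p\mathrel{\theta}q$ implies $[\mathrm{Opt}(p)]_\theta=[\mathrm{Opt}(q)]_\theta$. The quotient $\mathsf{D}/\theta$ has positions the $\theta$-classes and $\mathrm{Opt}([p]_\theta):=[\mathrm{Opt}_\mathsf{D}(p)]_\theta$. For an optiongraph $\mathsf{E}$, $\bowtie_\mathsf{E}$ is the union of all congruence relations on $\mathsf{E}$ (the maximum congruence) and $\mathsf{E}/{\bowtie_\mathsf{E}}$ is its minimum quotient. *)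

theory Defs
  imports Main
begin

definition optiongraph :: "'a set \<Rightarrow> ('a \<Rightarrow> 'a set) \<Rightarrow> bool" where
  "optiongraph D Opt \<longleftrightarrow> D \<noteq> {} \<and> (\<forall>p\<in>D. Opt p \<subseteq> D)"

definition eclass :: "('a \<times> 'a) set \<Rightarrow> 'a \<Rightarrow> 'a set" where
  "eclass \<theta> p = \<theta> `` {p}"

definition eclasses :: "('a \<times> 'a) set \<Rightarrow> 'a set \<Rightarrow> 'a set set" where
  "eclasses \<theta> S = eclass \<theta> ` S"

definition congruence_rel :: "'a set \<Rightarrow> ('a \<Rightarrow> 'a set) \<Rightarrow> ('a \<times> 'a) set \<Rightarrow> bool" where
  "congruence_rel D Opt \<theta> \<longleftrightarrow> equiv D \<theta> \<and>
     (\<forall>p q. (p, q) \<in> \<theta> \<longrightarrow> eclasses \<theta> (Opt p) = eclasses \<theta> (Opt q))"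

text \<open>Quotient optiongraph D/theta: positions D//theta, options of a class computed
  from any representative (well defined for congruences).\<close>
definition quot_pos :: "'a set \<Rightarrow> ('a \<times> 'a) set \<Rightarrow> 'a set set" where
  "quot_pos D \<theta> = D // \<theta>"

definition quot_opt :: "('a \<Rightarrow> 'a set) \<Rightarrow> ('a \<times> 'a) set \<Rightarrow> 'a set \<Rightarrow> 'a set set" where
  "quot_opt Opt \<theta> X = eclasses \<theta> (Opt (SOME p. p \<in> X))"

definition og_iso :: "'a set \<Rightarrow> ('a \<Rightarrow> 'a set) \<Rightarrow> 'b set \<Rightarrow> ('b \<Rightarrow> 'b set) \<Rightarrow> bool" where
  "og_iso C OptC D OptD \<longleftrightarrow>
     (\<exists>f. bij_betw f C D \<and> (\<forall>p\<in>C. OptD (f p) = f ` OptC p))"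

definition max_cong :: "'a set \<Rightarrow> ('a \<Rightarrow> 'a set) \<Rightarrow> ('a \<times> 'a) set" where
  "max_cong D Opt = \<Union> {\<theta>. congruence_rel D Opt \<theta>}"

end

theory Submission
  imports Defs
begin

text \<open>Call a surjective option-preserving map an epimorphism. For an epimorphism
  \<open>h : D \<rightarrow> E\<close> the maximum congruence of \<open>E\<close> pulls back to a congruence of \<open>D\<close>, and the
  maximum congruence of \<open>D\<close>, which contains the kernel of \<open>h\<close>, pushes forward to a
  congruence of \<open>E\<close>. Hence \<open>p \<bowtie>\<^sub>D q \<longleftrightarrow> h p \<bowtie>\<^sub>E h q\<close>, and \<open>h\<close> induces an isomorphism of the
  minimum quotients. Both \<open>D \<rightarrow> D/\<theta> \<cong> S/\<psi>\<close> and \<open>S \<rightarrow> S/\<psi>\<close> are epimorphisms, so the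
  minimum quotients of \<open>D\<close> and \<open>S\<close> are both isomorphic to that of \<open>S/\<psi>\<close>.
  Congruences are handled as equivalence relations that are bisimulations: related
  positions have \<open>rel_set\<close>-related option sets.\<close>

definition og_epi :: "('a \<Rightarrow> 'b) \<Rightarrow> 'a set \<Rightarrow> ('a \<Rightarrow> 'a set) \<Rightarrow> 'b set \<Rightarrow> ('b \<Rightarrow> 'b set) \<Rightarrow> bool"
  where "og_epi h C OptC D OptD \<longleftrightarrow> h ` C = D \<and> (\<forall>p\<in>C. OptD (h p) = h ` OptC p)"

lemma optiongraph_og_epi:
  assumes "optiongraph C OptC" "og_epi h C OptC D OptD"
  shows "optiongraph D OptD"
  using assms unfolding optiongraph_def og_epi_def by blast

lemma og_epi_comp:
  assumes "og_epi f A OptA B OptB" "og_epi g B OptB C OptC"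
  shows "og_epi (g \<circ> f) A OptA C OptC"
  using assms unfolding og_epi_def by (auto simp: image_comp)

lemma og_iso_imp_og_epi:
  assumes "og_iso C OptC D OptD"
  obtains f where "og_epi f C OptC D OptD"
  using assms unfolding og_iso_def og_epi_def bij_betw_def by blast

lemma og_iso_sym:
  assumes "og_iso C OptC D OptD" "optiongraph C OptC"
  shows "og_iso D OptD C OptC"
proof -
  obtain f where f: "bij_betw f C D" "\<forall>p\<in>C. OptD (f p) = f ` OptC p"
    using assms(1) unfolding og_iso_def by blast
  let ?g = "the_inv_into C f"
  have g_f: "?g (f x) = x" if "x \<in> C" for x
    using the_inv_into_f_f[OF bij_betw_imp_inj_on[OF f(1)] that] .
  have "OptC (?g q) = ?g ` OptD q" if "q \<in> D" for q
  proof -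
    obtain p where p: "p \<in> C" "q = f p" using f(1) \<open>q \<in> D\<close> by (auto simp: bij_betw_def)
    have "OptC p \<subseteq> C" using assms(2) p(1) unfolding optiongraph_def by blast
    then have "?g ` f ` OptC p = OptC p"
      unfolding image_image using g_f by (simp add: subset_iff cong: image_cong)
    then show ?thesis using f(2) p g_f by simp
  qed
  with bij_betw_the_inv_into[OF f(1)] show ?thesis
    unfolding og_iso_def by (intro exI[of _ ?g] conjI ballI)
qed

lemma og_iso_trans:
  assumes "og_iso A OptA B OptB" "og_iso B OptB C OptC"
  shows "og_iso A OptA C OptC"
proof -
  obtain f where f: "bij_betw f A B" "\<forall>p\<in>A. OptB (f p) = f ` OptA p"
    using assms(1) unfolding og_iso_def by blast
  obtain g where g: "bij_betw g B C" "\<forall>p\<in>B. OptC (g p) = g ` OptB p"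
    using assms(2) unfolding og_iso_def by blast
  have "\<forall>p\<in>A. OptC ((g \<circ> f) p) = (g \<circ> f) ` OptA p"
    using f g by (simp add: bij_betwE image_comp)
  with bij_betw_trans[OF f(1) g(1)] show ?thesis
    unfolding og_iso_def by (intro exI[of _ "g \<circ> f"] conjI)
qed

lemma rel_set_image: "rel_set R (f ` A) (g ` B) \<longleftrightarrow> rel_set (\<lambda>a b. R (f a) (g b)) A B"
  unfolding rel_set_def by auto

lemma rel_set_cong:
  assumes "\<And>a b. a \<in> A \<Longrightarrow> b \<in> B \<Longrightarrow> R a b \<longleftrightarrow> S a b"
  shows "rel_set R A B \<longleftrightarrow> rel_set S A B"
  using assms unfolding rel_set_def by blast

lemma image_eq_iff_rel_set: "f ` A = f ` B \<longleftrightarrow> rel_set (\<lambda>a b. f a = f b) A B"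
  using rel_set_image[of "(=)" f A f B] by (simp add: rel_set_eq)

lemma eclasses_eq_iff_rel_set:
  assumes "equiv D \<theta>" "A \<subseteq> D" "B \<subseteq> D"
  shows "eclasses \<theta> A = eclasses \<theta> B \<longleftrightarrow> rel_set (in_rel \<theta>) A B"
  unfolding eclasses_def image_eq_iff_rel_set
  using eq_equiv_class_iff[OF assms(1)] assms(2,3)
  by (intro rel_set_cong) (auto simp: eclass_def)

lemma congruence_rel_iff_bisim:
  assumes "optiongraph D Opt"
  shows "congruence_rel D Opt \<theta> \<longleftrightarrow>
    equiv D \<theta> \<and> (\<forall>p q. (p, q) \<in> \<theta> \<longrightarrow> rel_set (in_rel \<theta>) (Opt p) (Opt q))"
proof -
  have "eclasses \<theta> (Opt p) = eclasses \<theta> (Opt q) \<longleftrightarrow> rel_set (in_rel \<theta>) (Opt p) (Opt q)"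
    if "equiv D \<theta>" "(p, q) \<in> \<theta>" for p q
  proof -
    have "p \<in> D" "q \<in> D" using equiv_type[OF that(1)] that(2) by auto
    then show ?thesis
      using eclasses_eq_iff_rel_set[OF that(1)] assms unfolding optiongraph_def by simp
  qed
  then show ?thesis unfolding congruence_rel_def by blast
qed

lemma congruence_rel_Id_on: "congruence_rel D Opt (Id_on D)"
  unfolding congruence_rel_def by (auto simp: equiv_def refl_on_def sym_def trans_def)

lemma max_cong_greatest: "congruence_rel D Opt \<theta> \<Longrightarrow> \<theta> \<subseteq> max_cong D Opt"
  unfolding max_cong_def by blast

text \<open>The union of all congruences is reflexive and symmetric, and bisimilarity is preserved
  under composition, so its transitive closure is again a congruence and hence no larger.\<close>

lemma congruence_rel_max_cong:
  assumes og: "optiongraph D Opt"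
  shows "congruence_rel D Opt (max_cong D Opt)"
proof -
  let ?M = "max_cong D Opt"
  have M_sub: "?M \<subseteq> D \<times> D"
    using equiv_type unfolding max_cong_def congruence_rel_def by blast
  have "equiv D (?M\<^sup>+)"
  proof (rule equivI)
    show trancl_sub: "?M\<^sup>+ \<subseteq> D \<times> D" using trancl_subset_Sigma[OF M_sub] .
    have "Id_on D \<subseteq> ?M\<^sup>+"
      using max_cong_greatest[OF congruence_rel_Id_on[of D Opt]] r_into_trancl' by blast
    with trancl_sub show "refl_on D (?M\<^sup>+)" unfolding refl_on_def by auto
    have "sym ?M" unfolding max_cong_def congruence_rel_def equiv_def sym_def by blast
    then show "sym (?M\<^sup>+)" by (rule sym_trancl)
  qed (rule trans_trancl)
  have bisim_step: "rel_set (in_rel (?M\<^sup>+)) (Opt p) (Opt q)" if "(p, q) \<in> ?M" for p q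
  proof -
    obtain \<theta> where \<theta>: "congruence_rel D Opt \<theta>" "(p, q) \<in> \<theta>"
      using \<open>(p, q) \<in> ?M\<close> unfolding max_cong_def by blast
    then have "rel_set (in_rel \<theta>) (Opt p) (Opt q)" using congruence_rel_iff_bisim[OF og] by blast
    moreover have "in_rel \<theta> \<le> in_rel (?M\<^sup>+)" using max_cong_greatest[OF \<theta>(1)] by auto
    ultimately show ?thesis using rel_set_mono by blast
  qed
  have "rel_set (in_rel (?M\<^sup>+)) (Opt p) (Opt q)" if "(p, q) \<in> ?M\<^sup>+" for p q
    using that
  proof (induction rule: trancl_induct)
    case (base q)
    then show ?case by (rule bisim_step)
  next
    case (step q r)
    then have "(rel_set (in_rel (?M\<^sup>+)) OO rel_set (in_rel (?M\<^sup>+))) (Opt p) (Opt r)"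
      using bisim_step by blast
    moreover have "in_rel (?M\<^sup>+) OO in_rel (?M\<^sup>+) \<le> in_rel (?M\<^sup>+)" by auto
    ultimately show ?case by (metis rel_set_OO rel_set_mono predicate2D)
  qed
  then have cong_trancl: "congruence_rel D Opt (?M\<^sup>+)"
    using congruence_rel_iff_bisim[OF og] \<open>equiv D (?M\<^sup>+)\<close> by blast
  then have "?M\<^sup>+ \<subseteq> ?M" by (rule max_cong_greatest)
  then have "?M\<^sup>+ = ?M" using r_into_trancl' by blast
  with cong_trancl show ?thesis by simp
qed

lemma congruence_rel_pullback:
  assumes ogD: "optiongraph D OptD" and ogE: "optiongraph E OptE"
    and h: "og_epi h D OptD E OptE" and \<psi>: "congruence_rel E OptE \<psi>"
  shows "congruence_rel D OptD {(p, q). p \<in> D \<and> q \<in> D \<and> (h p, h q) \<in> \<psi>}"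
    (is "congruence_rel D OptD ?\<phi>")
proof -
  have "equiv E \<psi>" using \<psi> unfolding congruence_rel_def by blast
  then have "equiv D ?\<phi>"
    using h unfolding og_epi_def equiv_def refl_on_def sym_def trans_def by blast
  moreover have "rel_set (in_rel ?\<phi>) (OptD p) (OptD q)" if pq: "(p, q) \<in> ?\<phi>" for p q
  proof -
    have "rel_set (in_rel \<psi>) (OptE (h p)) (OptE (h q))"
      using pq \<psi> congruence_rel_iff_bisim[OF ogE] by blast
    moreover have "OptE (h p) = h ` OptD p" "OptE (h q) = h ` OptD q"
      using pq h unfolding og_epi_def by auto
    ultimately have "rel_set (\<lambda>x y. (h x, h y) \<in> \<psi>) (OptD p) (OptD q)"
      by (simp add: rel_set_image)
    moreover have "OptD p \<subseteq> D" "OptD q \<subseteq> D" using pq ogD unfolding optiongraph_def by auto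
    ultimately show ?thesis by (subst rel_set_cong[where S = "\<lambda>x y. (h x, h y) \<in> \<psi>"]) auto
  qed
  ultimately show ?thesis using congruence_rel_iff_bisim[OF ogD] by blast
qed

lemma congruence_rel_image:
  assumes ogD: "optiongraph D OptD" and ogE: "optiongraph E OptE"
    and h: "og_epi h D OptD E OptE" and \<theta>: "congruence_rel D OptD \<theta>"
    and ker: "\<And>p q. p \<in> D \<Longrightarrow> q \<in> D \<Longrightarrow> h p = h q \<Longrightarrow> (p, q) \<in> \<theta>"
  shows "congruence_rel E OptE {(h p, h q) | p q. (p, q) \<in> \<theta>}"
    (is "congruence_rel E OptE ?\<psi>")
proof -
  have equiv_\<theta>: "equiv D \<theta>" using \<theta> unfolding congruence_rel_def by blast
  have "?\<psi> \<subseteq> E \<times> E" using equiv_type[OF equiv_\<theta>] h unfolding og_epi_def by blast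
  moreover have "refl_on E ?\<psi>"
    using \<open>?\<psi> \<subseteq> E \<times> E\<close> equiv_\<theta> h unfolding og_epi_def equiv_def refl_on_def by blast
  moreover have "sym ?\<psi>" using equiv_\<theta> unfolding equiv_def sym_def by blast
  moreover have "trans ?\<psi>"
  proof (rule transI)
    fix a b c assume "(a, b) \<in> ?\<psi>" "(b, c) \<in> ?\<psi>"
    then obtain p q q' r
      where "(p, q) \<in> \<theta>" "(q', r) \<in> \<theta>" "h q = h q'" "a = h p" "c = h r"
      by blast
    moreover have "(q, q') \<in> \<theta>" using calculation ker equiv_type[OF equiv_\<theta>] by blast
    ultimately show "(a, c) \<in> ?\<psi>" using equiv_\<theta> unfolding equiv_def trans_def by blast
  qed
  ultimately have "equiv E ?\<psi>" by (rule equivI)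
  moreover have "rel_set (in_rel ?\<psi>) (OptE a) (OptE b)" if ab: "(a, b) \<in> ?\<psi>" for a b
  proof -
    obtain p q where pq: "(p, q) \<in> \<theta>" "a = h p" "b = h q" using ab by blast
    then have "rel_set (in_rel \<theta>) (OptD p) (OptD q)"
      using \<theta> congruence_rel_iff_bisim[OF ogD] by blast
    then have "rel_set (\<lambda>x y. (h x, h y) \<in> ?\<psi>) (OptD p) (OptD q)"
      by (rule rel_set_mono[THEN predicate2D, rotated]) (auto simp: le_fun_def)
    moreover have "OptE a = h ` OptD p" "OptE b = h ` OptD q"
      using h pq equiv_type[OF equiv_\<theta>] unfolding og_epi_def by auto
    ultimately show ?thesis by (simp add: rel_set_image)
  qed
  ultimately show ?thesis using congruence_rel_iff_bisim[OF ogE] by blast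
qed

lemma max_cong_og_epi_iff:
  assumes ogD: "optiongraph D OptD" and ogE: "optiongraph E OptE"
    and h: "og_epi h D OptD E OptE" and p: "p \<in> D" and q: "q \<in> D"
  shows "(p, q) \<in> max_cong D OptD \<longleftrightarrow> (h p, h q) \<in> max_cong E OptE"
proof
  have ker: "(x, y) \<in> max_cong D OptD" if "x \<in> D" "y \<in> D" "h x = h y" for x y
  proof -
    have "h x \<in> E" using h that(1) unfolding og_epi_def by blast
    with that have "(x, y) \<in> {(p, q). p \<in> D \<and> q \<in> D \<and> (h p, h q) \<in> Id_on E}"
      by (simp add: Id_onI)
    then show ?thesis
      using max_cong_greatest[OF congruence_rel_pullback[OF ogD ogE h congruence_rel_Id_on]]
      by (rule rev_subsetD)
  qed
  have "{(h p, h q) | p q. (p, q) \<in> max_cong D OptD} \<subseteq> max_cong E OptE"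
    by (rule max_cong_greatest[OF
          congruence_rel_image[OF ogD ogE h congruence_rel_max_cong[OF ogD] ker]])
  then show "(h p, h q) \<in> max_cong E OptE" if "(p, q) \<in> max_cong D OptD"
    using that by blast
next
  have "{(p, q). p \<in> D \<and> q \<in> D \<and> (h p, h q) \<in> max_cong E OptE} \<subseteq> max_cong D OptD"
    by (rule max_cong_greatest[OF
          congruence_rel_pullback[OF ogD ogE h congruence_rel_max_cong[OF ogE]]])
  then show "(p, q) \<in> max_cong D OptD" if "(h p, h q) \<in> max_cong E OptE"
    using that p q by blast
qed

lemma quot_opt_eclass:
  assumes \<theta>: "congruence_rel D Opt \<theta>" and "p \<in> D"
  shows "quot_opt Opt \<theta> (eclass \<theta> p) = eclass \<theta> ` Opt p"
proof -
  define r where "r = (SOME x. x \<in> eclass \<theta> p)"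
  have "equiv D \<theta>" using \<theta> unfolding congruence_rel_def by blast
  then have "p \<in> eclass \<theta> p" using \<open>p \<in> D\<close> equiv_class_self unfolding eclass_def by fast
  then have "r \<in> eclass \<theta> p" unfolding r_def by (rule someI)
  then have "(p, r) \<in> \<theta>" unfolding eclass_def by simp
  then have "eclasses \<theta> (Opt r) = eclasses \<theta> (Opt p)"
    using \<theta> unfolding congruence_rel_def by metis
  then show ?thesis unfolding quot_opt_def r_def eclasses_def by simp
qed

lemma quot_pos_eq_image_eclass: "quot_pos D \<theta> = eclass \<theta> ` D"
  unfolding quot_pos_def quotient_def eclass_def by blast

lemma og_epi_eclass:
  assumes "congruence_rel D Opt \<theta>"
  shows "og_epi (eclass \<theta>) D Opt (quot_pos D \<theta>) (quot_opt Opt \<theta>)"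
  using quot_opt_eclass[OF assms] unfolding og_epi_def quot_pos_eq_image_eclass by blast

lemma og_iso_quot_og_epi:
  assumes og: "optiongraph D OptD" and g: "og_epi g D OptD E OptE"
    and \<theta>: "congruence_rel D OptD \<theta>"
    and ker: "\<And>p q. p \<in> D \<Longrightarrow> q \<in> D \<Longrightarrow> (p, q) \<in> \<theta> \<longleftrightarrow> g p = g q"
  shows "og_iso (quot_pos D \<theta>) (quot_opt OptD \<theta>) E OptE"
proof -
  have equiv_\<theta>: "equiv D \<theta>" using \<theta> unfolding congruence_rel_def by blast
  define F where "F X = the_elem (g ` X)" for X
  have F_eclass: "F (eclass \<theta> p) = g p" if p: "p \<in> D" for p
  proof -
    have "g q = g p" if "q \<in> eclass \<theta> p" for q
      using that ker[of p q] p equiv_type[OF equiv_\<theta>] unfolding eclass_def by auto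
    moreover have "p \<in> eclass \<theta> p" using equiv_class_self[OF equiv_\<theta> p] by (simp add: eclass_def)
    ultimately have "g ` eclass \<theta> p = {g p}" by blast
    then show ?thesis unfolding F_def by simp
  qed
  have "bij_betw F (quot_pos D \<theta>) E"
  proof (rule bij_betw_imageI)
    show "inj_on F (quot_pos D \<theta>)"
    proof (rule inj_onI)
      fix X Y assume "X \<in> quot_pos D \<theta>" "Y \<in> quot_pos D \<theta>" "F X = F Y"
      then obtain p q where "p \<in> D" "q \<in> D" "X = eclass \<theta> p" "Y = eclass \<theta> q" "F X = F Y"
        unfolding quot_pos_eq_image_eclass by blast
      then show "X = Y" using F_eclass ker equiv_class_eq[OF equiv_\<theta>] unfolding eclass_def by simp
    qed
    show "F ` quot_pos D \<theta> = E"
      using F_eclass g unfolding og_epi_def quot_pos_eq_image_eclass by (simp add: image_image)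
  qed
  moreover have "OptE (F X) = F ` quot_opt OptD \<theta> X" if X: "X \<in> quot_pos D \<theta>" for X
  proof -
    obtain p where p: "p \<in> D" "X = eclass \<theta> p"
      using X unfolding quot_pos_eq_image_eclass by blast
    have "OptD p \<subseteq> D" using og p(1) unfolding optiongraph_def by blast
    then have "F ` eclass \<theta> ` OptD p = g ` OptD p"
      unfolding image_image using F_eclass by (intro image_cong) auto
    then show ?thesis using g p F_eclass quot_opt_eclass[OF \<theta>] unfolding og_epi_def by simp
  qed
  ultimately show ?thesis unfolding og_iso_def by (intro exI[of _ F] conjI ballI)
qed

lemma og_iso_max_quot_og_epi:
  assumes ogD: "optiongraph D OptD" and h: "og_epi h D OptD E OptE"
  shows "og_iso (quot_pos D (max_cong D OptD)) (quot_opt OptD (max_cong D OptD))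
                (quot_pos E (max_cong E OptE)) (quot_opt OptE (max_cong E OptE))"
proof -
  have ogE: "optiongraph E OptE" using optiongraph_og_epi[OF ogD h] .
  have cong_E: "congruence_rel E OptE (max_cong E OptE)" using congruence_rel_max_cong[OF ogE] .
  then have "equiv E (max_cong E OptE)" unfolding congruence_rel_def by blast
  have kernel: "(p, q) \<in> max_cong D OptD \<longleftrightarrow>
      (eclass (max_cong E OptE) \<circ> h) p = (eclass (max_cong E OptE) \<circ> h) q"
    if "p \<in> D" "q \<in> D" for p q
  proof -
    have "h p \<in> E" "h q \<in> E" using h that unfolding og_epi_def by blast+
    then show ?thesis
      using max_cong_og_epi_iff[OF ogD ogE h that]
        eq_equiv_class_iff[OF \<open>equiv E (max_cong E OptE)\<close>]
      by (simp add: eclass_def)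
  qed
  show ?thesis
    using og_iso_quot_og_epi[OF ogD og_epi_comp[OF h og_epi_eclass[OF cong_E]]
        congruence_rel_max_cong[OF ogD] kernel] .
qed

theorem mainTheorem14:
  fixes D :: "'a set" and OptD :: "'a \<Rightarrow> 'a set"
    and S :: "'b set" and OptS :: "'b \<Rightarrow> 'b set"
    and \<theta> :: "('a \<times> 'a) set" and \<psi> :: "('b \<times> 'b) set"
  assumes "optiongraph D OptD" and "optiongraph S OptS"
    and "congruence_rel D OptD \<theta>" and "congruence_rel S OptS \<psi>"
    and "og_iso (quot_pos D \<theta>) (quot_opt OptD \<theta>) (quot_pos S \<psi>) (quot_opt OptS \<psi>)"
  shows "og_iso (quot_pos D (max_cong D OptD)) (quot_opt OptD (max_cong D OptD))
                (quot_pos S (max_cong S OptS)) (quot_opt OptS (max_cong S OptS))"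
proof -
  let ?SQ = "quot_pos S \<psi>" and ?OptSQ = "quot_opt OptS \<psi>"
  obtain f where "og_epi f (quot_pos D \<theta>) (quot_opt OptD \<theta>) ?SQ ?OptSQ"
    using og_iso_imp_og_epi[OF assms(5)] .
  then have "og_epi (f \<circ> eclass \<theta>) D OptD ?SQ ?OptSQ"
    by (rule og_epi_comp[OF og_epi_eclass[OF assms(3)]])
  then have min_D: "og_iso (quot_pos D (max_cong D OptD)) (quot_opt OptD (max_cong D OptD))
      (quot_pos ?SQ (max_cong ?SQ ?OptSQ)) (quot_opt ?OptSQ (max_cong ?SQ ?OptSQ))"
    by (rule og_iso_max_quot_og_epi[OF assms(1)])
  have min_S: "og_iso (quot_pos S (max_cong S OptS)) (quot_opt OptS (max_cong S OptS))
      (quot_pos ?SQ (max_cong ?SQ ?OptSQ)) (quot_opt ?OptSQ (max_cong ?SQ ?OptSQ))"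
    by (rule og_iso_max_quot_og_epi[OF assms(2) og_epi_eclass[OF assms(4)]])
  have "optiongraph (quot_pos S (max_cong S OptS)) (quot_opt OptS (max_cong S OptS))"
    by (rule optiongraph_og_epi[OF assms(2) og_epi_eclass[OF congruence_rel_max_cong[OF assms(2)]]])
  then show ?thesis by (rule og_iso_trans[OF min_D og_iso_sym[OF min_S]])
qed

end
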